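(* Let $\varepsilon>0$, assume $(a,b,c)\neq(0,0,0)$, and let $0<\lambda<a_1$. Then the equilibrium point $$e_{2\lambda}=\Big(\frac{a}{\lambda-a_1},\frac{b}{\lambda-a_2},\frac{c}{\lambda-a_3}\Big)$$ of the $\varepsilon$-revised system $$\dot{\mathbf x}=\mathbf x\times\mathbf m(\mathbf x)+\varepsilon[(\mathbf x\times\mathbf m(\mathbf x))\times\mathbf m(\mathbf x)]$$ is unstable (not Lyapunov stable).
   Context: Fix constants $0<a_1<a_2<a_3$ and $a,b,c\in\mathbb R$. Set $\mathbf m(\mathbf x)=(a_1x^1+a,\ a_2x^2+b,\ a_3x^3+c)$; $\times$ is the cross product in $\mathbb R^3$. For $\lambda\notin\{a_1,a_2,a_3\}$ the point $e_{2\lambda}$ satisfies $\mathbf m(e_{2\lambda})=\lambda e_{2\lambda}$, so it is an equilibrium. *)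

theory Defs
  imports "HOL-Analysis.Analysis"
begin

definition mvec :: "real \<Rightarrow> real \<Rightarrow> real \<Rightarrow> real \<Rightarrow> real \<Rightarrow> real \<Rightarrow> real^3 \<Rightarrow> real^3" where
  "mvec a1 a2 a3 a b c x = vector [a1 * x$1 + a, a2 * x$2 + b, a3 * x$3 + c]"

definition revised_field :: "real \<Rightarrow> real \<Rightarrow> real \<Rightarrow> real \<Rightarrow> real \<Rightarrow> real \<Rightarrow> real \<Rightarrow> real^3 \<Rightarrow> real^3" where
  "revised_field eps a1 a2 a3 a b c x =
     cross3 x (mvec a1 a2 a3 a b c x)
     + eps *\<^sub>R cross3 (cross3 x (mvec a1 a2 a3 a b c x)) (mvec a1 a2 a3 a b c x)"

text \<open>For every eps > 0 there is delta > 0 such that every initial value within delta of x0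
  gives a solution defined for all t \<ge> 0 that stays within eps of x0. (The field here is
  polynomial, hence locally Lipschitz, so solutions are unique.)\<close>
definition lyapunov_stable :: "('a::real_normed_vector \<Rightarrow> 'a) \<Rightarrow> 'a \<Rightarrow> bool" where
  "lyapunov_stable f x0 \<longleftrightarrow>
     (\<forall>e>0. \<exists>d>0. \<forall>y0. dist y0 x0 < d \<longrightarrow>
        (\<exists>x. x 0 = y0 \<and>
             (\<forall>t\<ge>0. (x has_vector_derivative f (x t)) (at t within {0..})) \<and>
             (\<forall>t\<ge>0. dist (x t) x0 < e)))"

definition e2 :: "real \<Rightarrow> real \<Rightarrow> real \<Rightarrow> real \<Rightarrow> real \<Rightarrow> real \<Rightarrow> real \<Rightarrow> real^3" where
  "e2 a1 a2 a3 a b c lam = vector [a / (lam - a1), b / (lam - a2), c / (lam - a3)]"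

end

theory Submission
  imports Defs
begin

text \<open>
  The Hamiltonian \<open>H(x) = (a\<^sub>1 x\<^sub>1\<^sup>2 + a\<^sub>2 x\<^sub>2\<^sup>2 + a\<^sub>3 x\<^sub>3\<^sup>2)/2 + a x\<^sub>1 + b x\<^sub>2 + c x\<^sub>3\<close> has gradient
  \<open>m(x)\<close>, so it is a first integral of the revised field, while \<open>|x|\<^sup>2\<close> decreases at the rate
  \<open>2\<epsilon> |x \<times> m(x)|\<^sup>2\<close>. Hence \<open>W = 2H/\<lambda> - |x|\<^sup>2\<close>, normalised to vanish at \<open>e\<^sub>2\<^sub>\<lambda>\<close>, increases at that
  rate, and for \<open>\<lambda> < a\<^sub>1\<close> it is positive away from \<open>e\<^sub>2\<^sub>\<lambda>\<close>. The rate vanishes only where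
  \<open>m(x) = \<mu> x\<close>. If \<open>0 < \<mu> \<le> a\<^sub>1\<close>, such a point maximises \<open>|x|\<^sup>2 - 2H/\<mu>\<close>, hence has the largest
  norm on its energy level; on the level of \<open>e\<^sub>2\<^sub>\<lambda>\<close> this means \<open>W \<le> 0\<close> there. Near \<open>e\<^sub>2\<^sub>\<lambda>\<close> the
  multiplier \<open>\<mu>\<close> stays in \<open>(0, a\<^sub>1)\<close>, so a solution starting on that level with \<open>W > 0\<close> and
  staying near \<open>e\<^sub>2\<^sub>\<lambda>\<close> would live in a compact set where the rate is bounded below, and \<open>W\<close>
  would grow without bound (Chetaev's argument).
\<close>

lemma nondecreasing_if_nonneg_derivative:
  fixes \<phi> \<phi>' :: "real \<Rightarrow> real"
  assumes "\<And>t. 0 \<le> t \<Longrightarrow> (\<phi> has_real_derivative \<phi>' t) (at t within {0..})"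
    and "\<And>t. 0 \<le> t \<Longrightarrow> 0 \<le> \<phi>' t" and "0 \<le> T"
  shows "\<phi> 0 \<le> \<phi> T"
proof (rule DERIV_nonneg_imp_increasing_open[OF \<open>0 \<le> T\<close>])
  fix s assume s: "0 < s" "s < T"
  have "(\<phi> has_real_derivative \<phi>' s) (at s within {0<..})"
    by (rule DERIV_subset[OF assms(1)]) (use s in auto)
  then have "(\<phi> has_real_derivative \<phi>' s) (at s)"
    using at_within_open[of s "{0<..}"] s by simp
  then show "\<exists>y. (\<phi> has_real_derivative y) (at s) \<and> 0 \<le> y"
    using assms(2)[of s] s by auto
next
  show "continuous_on {0..T} \<phi>"
    using DERIV_subset[OF assms(1)] by (intro DERIV_continuous_on[where D=\<phi>']) fastforce
qed

lemma has_real_derivative_comp_has_vector_derivative: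
  fixes V :: "'a::real_normed_vector \<Rightarrow> real"
  assumes "(x has_vector_derivative v) (at t within S)" and "(V has_derivative DV) (at (x t))"
  shows "((\<lambda>t. V (x t)) has_real_derivative DV v) (at t within S)"
proof -
  have "((V \<circ> x) has_derivative DV \<circ> (\<lambda>h. h *\<^sub>R v)) (at t within S)"
    using diff_chain_within[OF assms(1)[unfolded has_vector_derivative_def]
        has_derivative_at_withinI[OF assms(2)]] .
  moreover have "DV \<circ> (\<lambda>h. h *\<^sub>R v) = (*) (DV v)"
    using linear_cmul[OF has_derivative_linear[OF assms(2)]] by (simp add: fun_eq_iff)
  ultimately show ?thesis by (simp add: has_field_derivative_def comp_def)
qed

lemma conserved_along_solution:
  fixes x :: "real \<Rightarrow> 'a::real_normed_vector" and V :: "'a \<Rightarrow> real"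
  assumes "\<And>t. 0 \<le> t \<Longrightarrow> (x has_vector_derivative f (x t)) (at t within {0..})"
    and "\<And>y. (V has_derivative DV y) (at y)" and "\<And>y. DV y (f y) = 0" and "0 \<le> t"
  shows "V (x t) = V (x 0)"
proof -
  have "((\<lambda>t. V (x t)) has_real_derivative 0) (at s within {0..})" if "0 \<le> s" for s
    using has_real_derivative_comp_has_vector_derivative[OF assms(1)[OF that] assms(2)] assms(3)
    by simp
  then have "\<exists>c. \<forall>s\<in>{0..}. V (x s) = c"
    by (intro has_field_derivative_zero_constant) auto
  then show ?thesis
    using \<open>0 \<le> t\<close> by force
qed

lemma linear_growth_along_solution:
  fixes x :: "real \<Rightarrow> 'a::real_normed_vector" and W :: "'a \<Rightarrow> real"
  assumes "\<And>t. 0 \<le> t \<Longrightarrow> (x has_vector_derivative f (x t)) (at t within {0..})"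
    and "\<And>y. (W has_derivative DW y) (at y)" and "\<And>t. 0 \<le> t \<Longrightarrow> c \<le> DW (x t) (f (x t))"
    and "0 \<le> t"
  shows "W (x 0) + c * t \<le> W (x t)"
proof -
  have "W (x 0) - c * 0 \<le> W (x t) - c * t"
  proof (rule nondecreasing_if_nonneg_derivative[OF _ _ \<open>0 \<le> t\<close>])
    fix s :: real assume "0 \<le> s"
    show "((\<lambda>t. W (x t) - c * t) has_real_derivative DW (x s) (f (x s)) - c * 1) (at s within {0..})"
      using has_real_derivative_comp_has_vector_derivative[OF assms(1)[OF \<open>0 \<le> s\<close>] assms(2)]
      by (intro DERIV_diff DERIV_cmult DERIV_ident)
    show "0 \<le> DW (x s) (f (x s)) - c * 1"
      using assms(3)[OF \<open>0 \<le> s\<close>] by simp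
  qed
  then show ?thesis
    by simp
qed

lemma solution_leaves_compact_if_uniform_growth:
  fixes x :: "real \<Rightarrow> 'a::real_normed_vector" and W :: "'a \<Rightarrow> real"
  assumes x_deriv: "\<And>t. 0 \<le> t \<Longrightarrow> (x has_vector_derivative f (x t)) (at t within {0..})"
    and W_deriv: "\<And>y. (W has_derivative DW y) (at y)"
    and "compact K" and "0 < c" and growth: "\<And>y. y \<in> K \<Longrightarrow> c \<le> DW y (f y)"
  shows "\<exists>t\<ge>0. x t \<notin> K"
proof (rule ccontr)
  assume "\<not> (\<exists>t\<ge>0. x t \<notin> K)"
  then have x_K: "x t \<in> K" if "0 \<le> t" for t
    using that by blast
  have "continuous_on K W"
    using has_derivative_continuous[OF W_deriv] by (simp add: continuous_at_imp_continuous_on)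
  moreover have "K \<noteq> {}"
    using x_K[of 0] by blast
  ultimately obtain M where M: "\<And>y. y \<in> K \<Longrightarrow> W y \<le> M"
    using continuous_attains_sup[OF \<open>compact K\<close>] by blast
  have x_growth: "W (x 0) + c * t \<le> W (x t)" if "0 \<le> t" for t
    using linear_growth_along_solution[OF x_deriv W_deriv growth[OF x_K] that] .
  define T where "T = (M - W (x 0)) / c + 1"
  have "0 \<le> T"
    using M[OF x_K[of 0]] \<open>0 < c\<close> unfolding T_def by simp
  moreover have "M < W (x 0) + c * T"
    using \<open>0 < c\<close> unfolding T_def by (simp add: field_simps)
  ultimately show False
    using x_growth[OF \<open>0 \<le> T\<close>] M[OF x_K[OF \<open>0 \<le> T\<close>]] by linarith
qed

lemma compact_level_superlevel_Int_cball:
  fixes V W :: "'a::heine_borel \<Rightarrow> real"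
  assumes "continuous_on UNIV V" and "continuous_on UNIV W"
  shows "compact {y. y \<in> cball x0 r \<and> V y = v \<and> w \<le> W y}"
proof -
  have "closed {y. V y = v}" "closed {y. w \<le> W y}"
    using assms by (auto intro!: closed_Collect_eq closed_Collect_le continuous_intros)
  then have "closed {y. y \<in> cball x0 r \<and> V y = v \<and> w \<le> W y}"
    using closed_cball[of x0 r, unfolded cball_def] by (intro closed_Collect_conj) auto
  moreover have "bounded {y. y \<in> cball x0 r \<and> V y = v \<and> w \<le> W y}"
    by (rule bounded_subset[OF bounded_cball]) blast
  ultimately show ?thesis
    by (simp add: compact_eq_bounded_closed)
qed

theorem Chetaev_instability:
  fixes f :: "'a::euclidean_space \<Rightarrow> 'a" and V W G :: "'a \<Rightarrow> real"
  assumes "0 < r"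
    and V_deriv: "\<And>y. (V has_derivative DV y) (at y)" and V_conserved: "\<And>y. DV y (f y) = 0"
    and W_deriv: "\<And>y. (W has_derivative DW y) (at y)" and W_growth: "\<And>y. G y \<le> DW y (f y)"
    and G_cont: "continuous_on (cball x0 r) G"
    and G_nonneg: "\<And>y. y \<in> cball x0 r \<Longrightarrow> 0 \<le> G y"
    and G_pos: "\<And>y. y \<in> cball x0 r \<Longrightarrow> V y = V x0 \<Longrightarrow> 0 < W y \<Longrightarrow> 0 < G y"
    and W_pos_near: "\<And>d. 0 < d \<Longrightarrow> \<exists>y. dist y x0 < d \<and> V y = V x0 \<and> 0 < W y"
  shows "\<not> lyapunov_stable f x0"
proof
  assume "lyapunov_stable f x0"
  then obtain d where "0 < d" and stable: "\<And>y0. dist y0 x0 < d \<Longrightarrow> \<exists>x. x 0 = y0 \<and>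
      (\<forall>t\<ge>0. (x has_vector_derivative f (x t)) (at t within {0..})) \<and> (\<forall>t\<ge>0. dist (x t) x0 < r)"
    using \<open>0 < r\<close> unfolding lyapunov_stable_def by blast
  obtain y0 where "dist y0 x0 < d" and "V y0 = V x0" and "0 < W y0"
    using W_pos_near[OF \<open>0 < d\<close>] by blast
  then obtain x where "x 0 = y0"
    and x_deriv: "\<And>t. 0 \<le> t \<Longrightarrow> (x has_vector_derivative f (x t)) (at t within {0..})"
    and x_near: "\<And>t. 0 \<le> t \<Longrightarrow> dist (x t) x0 < r"
    using stable by blast
  have x_ball: "x t \<in> cball x0 r" if "0 \<le> t" for t
    using x_near[OF that] by (simp add: dist_commute)
  define K where "K = {y. y \<in> cball x0 r \<and> V y = V x0 \<and> W y0 \<le> W y}"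
  have x_K: "x t \<in> K" if "0 \<le> t" for t
  proof -
    have "V (x t) = V x0"
      using conserved_along_solution[OF x_deriv V_deriv V_conserved that] \<open>x 0 = y0\<close> \<open>V y0 = V x0\<close>
      by simp
    moreover have "0 \<le> DW (x s) (f (x s))" if "0 \<le> s" for s
      using G_nonneg[OF x_ball[OF that]] W_growth[of "x s"] by linarith
    then have "W y0 \<le> W (x t)"
      using linear_growth_along_solution[OF x_deriv W_deriv _ that, of 0] \<open>x 0 = y0\<close> by simp
    ultimately show ?thesis
      using x_ball[OF that] unfolding K_def by blast
  qed
  have "compact K"
    unfolding K_def using has_derivative_continuous[OF V_deriv] has_derivative_continuous[OF W_deriv]
    by (intro compact_level_superlevel_Int_cball) (simp_all add: continuous_on_eq_continuous_at)
  moreover have "K \<noteq> {}" "K \<subseteq> cball x0 r"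
    using x_K[of 0] unfolding K_def by auto
  ultimately obtain z where "z \<in> K" and z_min: "\<And>y. y \<in> K \<Longrightarrow> G z \<le> G y"
    using continuous_attains_inf[OF \<open>compact K\<close> \<open>K \<noteq> {}\<close>]
      continuous_on_subset[OF G_cont \<open>K \<subseteq> cball x0 r\<close>] by blast
  have "0 < G z"
    using \<open>z \<in> K\<close> G_pos \<open>0 < W y0\<close> unfolding K_def by force
  moreover have "G z \<le> DW y (f y)" if "y \<in> K" for y
    using z_min[OF that] W_growth[of y] by linarith
  ultimately obtain t where "0 \<le> t" "x t \<notin> K"
    using solution_leaves_compact_if_uniform_growth[OF x_deriv W_deriv \<open>compact K\<close>] by blast
  then show False
    using x_K by blast
qed

lemma revised_term_inner_m: "m \<bullet> (cross3 x m + eps *\<^sub>R cross3 (cross3 x m) m) = 0"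
  by (simp add: inner_add_right dot_cross_self)

lemma revised_term_inner_self:
  "x \<bullet> (cross3 x m + eps *\<^sub>R cross3 (cross3 x m) m) = - eps * (norm (cross3 x m))\<^sup>2"
proof -
  have "x \<bullet> cross3 (cross3 x m) m = - (cross3 x m \<bullet> cross3 x m)"
    using cross_triple[of "cross3 x m" m x] cross_skew[of m x] by (simp add: inner_commute)
  then show ?thesis
    by (simp add: inner_add_right dot_cross_self power2_norm_eq_inner)
qed

lemma cross3_eq_0_imp_parallel:
  assumes "cross3 x y = 0" and "x \<noteq> 0"
  shows "y = ((x \<bullet> y) / (x \<bullet> x)) *\<^sub>R x"
proof -
  have "(x \<bullet> x) *\<^sub>R y = (x \<bullet> y) *\<^sub>R x"
    using Lagrange[of x y x] assms(1) cross_skew[of y x] by simp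
  moreover have "x \<bullet> x \<noteq> 0"
    using assms(2) by simp
  ultimately have "y = inverse (x \<bullet> x) *\<^sub>R ((x \<bullet> y) *\<^sub>R x)"
    by (metis scaleR_scaleR left_inverse scaleR_one)
  then show ?thesis
    by (simp add: divide_inverse_commute)
qed

locale diagonal_affine_field =
  fixes a1 a2 a3 a b c :: real
  assumes a1_pos: "0 < a1" and a1_le_a2: "a1 \<le> a2" and a2_le_a3: "a2 \<le> a3"
begin

abbreviation m :: "real^3 \<Rightarrow> real^3" where
  "m \<equiv> mvec a1 a2 a3 a b c"

lemma m_components [simp]:
  "m y $ 1 = a1 * y $ 1 + a" "m y $ 2 = a2 * y $ 2 + b" "m y $ 3 = a3 * y $ 3 + c"
  by (simp_all add: mvec_def)

lemma continuous_on_m: "continuous_on S m"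
proof -
  have "continuous_on S (\<lambda>y. m y $ i)" for i
  proof -
    have "continuous_on S (\<lambda>y. a1 * y $ 1 + a)" "continuous_on S (\<lambda>y. a2 * y $ 2 + b)"
      "continuous_on S (\<lambda>y. a3 * y $ 3 + c)"
      by (intro continuous_intros)+
    then show ?thesis
      using exhaust_3[of i] by auto
  qed
  then have "continuous_on S (\<lambda>y. \<chi> i. m y $ i)"
    by (rule continuous_on_vec_lambda)
  then show ?thesis
    by simp
qed

definition diag_form :: "real^3 \<Rightarrow> real" where
  "diag_form h = a1 * (h$1)\<^sup>2 + a2 * (h$2)\<^sup>2 + a3 * (h$3)\<^sup>2"

definition hamiltonian :: "real^3 \<Rightarrow> real" where
  "hamiltonian y = diag_form y / 2 + a * y$1 + b * y$2 + c * y$3"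

lemma hamiltonian_add_scaleR:
  "hamiltonian (x + s *\<^sub>R h) = hamiltonian x + s * (m x \<bullet> h) + s\<^sup>2 / 2 * diag_form h"
  by (simp add: hamiltonian_def diag_form_def inner_vec_def sum_3 algebra_simps power2_eq_square)

lemma has_derivative_hamiltonian: "(hamiltonian has_derivative (\<lambda>h. m y \<bullet> h)) (at y)"
  unfolding hamiltonian_def diag_form_def
  by (auto intro!: derivative_eq_intros bounded_linear.has_derivative[OF bounded_linear_vec_nth]
      simp: inner_vec_def sum_3 algebra_simps)

lemma diag_form_lower_bound: "a1 * (norm h)\<^sup>2 \<le> diag_form h"
proof -
  have "a1 * (h$2)\<^sup>2 \<le> a2 * (h$2)\<^sup>2" "a1 * (h$3)\<^sup>2 \<le> a3 * (h$3)\<^sup>2"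
    using a1_le_a2 a2_le_a3 by (auto intro!: mult_right_mono)
  moreover have "(norm h)\<^sup>2 = (h$1)\<^sup>2 + (h$2)\<^sup>2 + (h$3)\<^sup>2"
    unfolding power2_norm_eq_inner by (simp add: inner_vec_def sum_3 power2_eq_square)
  ultimately show ?thesis
    unfolding diag_form_def by (simp add: algebra_simps)
qed

lemma diag_form_pos: "h \<noteq> 0 \<Longrightarrow> 0 < diag_form h"
  using diag_form_lower_bound[of h] a1_pos by (smt (verit) mult_pos_pos zero_less_norm_iff zero_less_power)

lemma hamiltonian_second_intersection:
  assumes "h \<noteq> 0" and "s = - 2 * (m x \<bullet> h) / diag_form h"
  shows "hamiltonian (x + s *\<^sub>R h) = hamiltonian x"
proof -
  have "hamiltonian (x + s *\<^sub>R h) = hamiltonian x + s * (m x \<bullet> h + s / 2 * diag_form h)"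
    by (simp add: hamiltonian_add_scaleR power2_eq_square algebra_simps)
  also have "m x \<bullet> h + s / 2 * diag_form h = 0"
    using assms diag_form_pos[of h] by simp
  finally show ?thesis
    by simp
qed

lemma dist_second_intersection_le:
  assumes "h \<noteq> 0" and "s = - 2 * (m x \<bullet> h) / diag_form h"
  shows "dist (x + s *\<^sub>R h) x \<le> 2 * \<bar>m x \<bullet> h\<bar> / (a1 * norm h)"
proof -
  have "dist (x + s *\<^sub>R h) x = 2 * \<bar>m x \<bullet> h\<bar> * norm h / diag_form h"
    using assms diag_form_pos[of h] by (simp add: dist_norm abs_mult)
  also have "\<dots> \<le> 2 * \<bar>m x \<bullet> h\<bar> * norm h / (a1 * (norm h)\<^sup>2)"
    using diag_form_lower_bound[of h] diag_form_pos[of h] a1_pos assms(1)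
    by (intro divide_left_mono) auto
  also have "\<dots> = 2 * \<bar>m x \<bullet> h\<bar> / (a1 * norm h)"
    by (simp add: power2_eq_square)
  finally show ?thesis .
qed

lemma energy_level_not_isolated:
  assumes "m x \<noteq> 0" and "0 < d"
  obtains y where "y \<noteq> x" "dist y x < d" "hamiltonian y = hamiltonian x"
proof -
  obtain u where "u \<noteq> 0" and "orthogonal (m x) u"
    using orthogonal_to_vector_exists[of "m x"] by auto
  define \<tau> where "\<tau> = d * a1 * norm u / (4 * (norm (m x))\<^sup>2)"
  have "0 < \<tau>"
    using assms a1_pos \<open>u \<noteq> 0\<close> by (simp add: \<tau>_def)
  \<comment> \<open>Tilting the tangent direction \<open>u\<close> slightly towards the gradient, the line through \<open>x\<close>
    meets the energy level again close to \<open>x\<close>.\<close>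
  define h where "h = u + \<tau> *\<^sub>R m x"
  have mx_h: "m x \<bullet> h = \<tau> * (norm (m x))\<^sup>2"
    using \<open>orthogonal (m x) u\<close> by (simp add: h_def inner_add_right orthogonal_def power2_norm_eq_inner)
  have "(norm h)\<^sup>2 = (norm u)\<^sup>2 + (norm (\<tau> *\<^sub>R m x))\<^sup>2"
    unfolding h_def using \<open>orthogonal (m x) u\<close>
    by (intro norm_add_Pythagorean) (simp add: orthogonal_def inner_commute)
  then have "norm u \<le> norm h"
    using power2_le_imp_le norm_ge_zero by (metis le_add_same_cancel1 zero_le_power2)
  then have "0 < norm u" "0 < norm h"
    using \<open>u \<noteq> 0\<close> by auto
  define s where "s = - 2 * (m x \<bullet> h) / diag_form h"
  show ?thesis
  proof (rule that[of "x + s *\<^sub>R h"])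
    show "hamiltonian (x + s *\<^sub>R h) = hamiltonian x"
      using \<open>0 < norm h\<close> s_def by (intro hamiltonian_second_intersection) auto
    have "s \<noteq> 0"
      using \<open>0 < \<tau>\<close> \<open>0 < norm h\<close> diag_form_pos[of h] assms(1) by (simp add: s_def mx_h)
    then show "x + s *\<^sub>R h \<noteq> x"
      using \<open>0 < norm h\<close> by auto
    have "dist (x + s *\<^sub>R h) x \<le> 2 * \<tau> * (norm (m x))\<^sup>2 / (a1 * norm h)"
      using dist_second_intersection_le[OF _ s_def] \<open>0 < norm h\<close> \<open>0 < \<tau>\<close> by (simp add: mx_h)
    also have "\<dots> \<le> 2 * \<tau> * (norm (m x))\<^sup>2 / (a1 * norm u)"
      using \<open>norm u \<le> norm h\<close> \<open>0 < \<tau>\<close> \<open>0 < norm u\<close> \<open>0 < norm h\<close> a1_pos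
      by (intro divide_left_mono mult_left_mono mult_pos_pos) auto
    also have "\<dots> = d / 2"
      using a1_pos \<open>u \<noteq> 0\<close> assms(1) by (simp add: \<tau>_def field_simps)
    finally show "dist (x + s *\<^sub>R h) x < d"
      using \<open>0 < d\<close> by simp
  qed
qed

definition energy_casimir :: "real \<Rightarrow> real^3 \<Rightarrow> real" where
  "energy_casimir mu y = (norm y)\<^sup>2 - 2 / mu * hamiltonian y"

lemma has_derivative_energy_casimir:
  "(energy_casimir mu has_derivative (\<lambda>h. 2 * (y \<bullet> h) - 2 / mu * (m y \<bullet> h))) (at y)"
proof -
  have "((\<lambda>y. y \<bullet> y) has_derivative (\<lambda>h. y \<bullet> h + h \<bullet> y)) (at y)"
    by (rule has_derivative_inner[OF has_derivative_ident has_derivative_ident])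
  moreover have "(\<lambda>h. y \<bullet> h + h \<bullet> y) = (\<lambda>h. 2 * (y \<bullet> h))"
    unfolding fun_eq_iff by (metis inner_commute mult_2)
  ultimately have "((\<lambda>y. y \<bullet> y) has_derivative (\<lambda>h. 2 * (y \<bullet> h))) (at y)"
    by simp
  then show ?thesis
    unfolding energy_casimir_def power2_norm_eq_inner
    by (intro has_derivative_diff has_derivative_mult_right has_derivative_hamiltonian)
qed

lemma energy_casimir_gap_lower_bound:
  assumes "m x = mu *\<^sub>R x" and "0 < mu"
  shows "(a1 - mu) * (norm (y - x))\<^sup>2 \<le> mu * (energy_casimir mu x - energy_casimir mu y)"
proof -
  have "hamiltonian y = hamiltonian x + mu * (x \<bullet> (y - x)) + diag_form (y - x) / 2"
    using hamiltonian_add_scaleR[of x 1 "y - x"] assms(1) by simp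
  moreover have "(norm y)\<^sup>2 = (norm x)\<^sup>2 + 2 * (x \<bullet> (y - x)) + (norm (y - x))\<^sup>2"
    unfolding power2_norm_eq_inner by (simp add: inner_diff inner_commute)
  ultimately have "mu * (energy_casimir mu x - energy_casimir mu y)
      = diag_form (y - x) - mu * (norm (y - x))\<^sup>2"
    using \<open>0 < mu\<close> unfolding energy_casimir_def by (simp add: field_simps)
  then show ?thesis
    using diag_form_lower_bound[of "y - x"] by (simp add: algebra_simps)
qed

lemma norm_le_of_eigen_same_energy:
  assumes "m y = mu *\<^sub>R y" and "0 < mu" "mu \<le> a1" and "hamiltonian z = hamiltonian y"
  shows "norm z \<le> norm y"
proof -
  have "0 \<le> mu * (energy_casimir mu y - energy_casimir mu z)"
    using energy_casimir_gap_lower_bound[OF assms(1,2), of z] \<open>mu \<le> a1\<close>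
    by (smt (verit) mult_nonneg_nonneg zero_le_power2)
  then have "(norm z)\<^sup>2 \<le> (norm y)\<^sup>2"
    using \<open>0 < mu\<close> assms(4) unfolding energy_casimir_def by (simp add: zero_le_mult_iff)
  then show ?thesis
    using power2_le_imp_le norm_ge_zero by blast
qed

lemma energy_casimir_less_of_eigen:
  assumes "m x = mu *\<^sub>R x" and "0 < mu" "mu < a1" and "y \<noteq> x"
  shows "energy_casimir mu y < energy_casimir mu x"
proof -
  have "0 < (a1 - mu) * (norm (y - x))\<^sup>2"
    using assms(3,4) by simp
  then have "0 < mu * (energy_casimir mu x - energy_casimir mu y)"
    using energy_casimir_gap_lower_bound[OF assms(1,2), of y] by linarith
  then show ?thesis
    using \<open>0 < mu\<close> by (simp add: zero_less_mult_iff)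
qed

definition multiplier :: "real^3 \<Rightarrow> real" where
  "multiplier y = (y \<bullet> m y) / (y \<bullet> y)"

lemma m_eq_multiplier_scaleR: "cross3 y (m y) = 0 \<Longrightarrow> y \<noteq> 0 \<Longrightarrow> m y = multiplier y *\<^sub>R y"
  unfolding multiplier_def by (rule cross3_eq_0_imp_parallel)

lemma multiplier_eigen: "m x = mu *\<^sub>R x \<Longrightarrow> x \<noteq> 0 \<Longrightarrow> multiplier x = mu"
  by (simp add: multiplier_def)

lemma isCont_multiplier: "x \<noteq> 0 \<Longrightarrow> isCont multiplier x"
  unfolding multiplier_def
  using continuous_on_m[of UNIV] by (auto intro!: continuous_intros simp: continuous_on_eq_continuous_at)

lemma energy_casimir_le_at_equilibrium_on_level:
  assumes "cross3 y (m y) = 0" "y \<noteq> 0" and "0 < multiplier y" "multiplier y \<le> a1"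
    and "hamiltonian y = hamiltonian x"
  shows "energy_casimir mu x \<le> energy_casimir mu y"
proof -
  have "norm x \<le> norm y"
    using m_eq_multiplier_scaleR[OF assms(1,2)] assms(3,4) assms(5)[symmetric]
    by (rule norm_le_of_eigen_same_energy)
  then show ?thesis
    using assms(5) by (simp add: energy_casimir_def power_mono)
qed

lemma multiplier_bounds_near_eigen:
  assumes "x \<noteq> 0" and "m x = mu *\<^sub>R x" and "0 < mu" "mu < a1"
  obtains r where "0 < r" "r < norm x" "\<And>y. y \<in> cball x r \<Longrightarrow> 0 < multiplier y \<and> multiplier y < a1"
proof -
  obtain d where "0 < d" and d: "\<And>y. dist y x < d \<Longrightarrow> dist (multiplier y) mu < min mu (a1 - mu)"
    using isCont_multiplier[OF assms(1)] multiplier_eigen[OF assms(2,1)] assms(3,4)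
    unfolding continuous_at_eps_delta by (metis diff_gt_0_iff_gt min_less_iff_conj)
  show ?thesis
  proof (rule that)
    show "0 < min (d / 2) (norm x / 2)" "min (d / 2) (norm x / 2) < norm x"
      using \<open>0 < d\<close> assms(1) by (auto simp: min_less_iff_disj)
    fix y assume "y \<in> cball x (min (d / 2) (norm x / 2))"
    then have "dist y x < d"
      using \<open>0 < d\<close> by (simp add: dist_commute)
    then have "\<bar>multiplier y - mu\<bar> < mu" "\<bar>multiplier y - mu\<bar> < a1 - mu"
      using d by (auto simp: dist_real_def)
    then show "0 < multiplier y \<and> multiplier y < a1"
      by linarith
  qed
qed

theorem not_lyapunov_stable_eigen_equilibrium:
  assumes "x \<noteq> 0" and "m x = mu *\<^sub>R x" and "0 < mu" "mu < a1" and "0 < eps"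
  shows "\<not> lyapunov_stable (revised_field eps a1 a2 a3 a b c) x"
proof -
  obtain r where "0 < r" "r < norm x"
    and multiplier_bounds: "\<And>y. y \<in> cball x r \<Longrightarrow> 0 < multiplier y \<and> multiplier y < a1"
    using multiplier_bounds_near_eigen[OF assms(1-4)] by blast
  let ?F = "revised_field eps a1 a2 a3 a b c"
  let ?W = "\<lambda>y. energy_casimir mu x - energy_casimir mu y"
  let ?G = "\<lambda>y. 2 * eps * (norm (cross3 y (m y)))\<^sup>2"
  have F_eq: "?F y = cross3 y (m y) + eps *\<^sub>R cross3 (cross3 y (m y)) (m y)" for y
    by (simp add: revised_field_def)
  have G_pos: "0 < ?G y" if "y \<in> cball x r" "hamiltonian y = hamiltonian x" "0 < ?W y" for y
  proof (rule ccontr)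
    assume "\<not> 0 < ?G y"
    then have "cross3 y (m y) = 0"
      using \<open>0 < eps\<close> by (auto simp: zero_less_mult_iff)
    moreover have "y \<noteq> 0"
      using that(1) \<open>r < norm x\<close> by auto
    ultimately have "?W y \<le> 0"
      using energy_casimir_le_at_equilibrium_on_level multiplier_bounds[OF that(1)] that(2)
      by (simp add: less_imp_le)
    then show False
      using that(3) by simp
  qed
  show ?thesis
  proof (rule Chetaev_instability[where r = r and V = hamiltonian
        and DV = "\<lambda>y h. m y \<bullet> h" and W = ?W and DW = "\<lambda>y h. - (2 * (y \<bullet> h) - 2 / mu * (m y \<bullet> h))"
        and G = ?G])
    show "(?W has_derivative (\<lambda>h. - (2 * (y \<bullet> h) - 2 / mu * (m y \<bullet> h)))) (at y)" for y
      using has_derivative_diff[OF has_derivative_const has_derivative_energy_casimir] by simp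
    show "?G y \<le> - (2 * (y \<bullet> ?F y) - 2 / mu * (m y \<bullet> ?F y))" for y
      by (simp add: F_eq revised_term_inner_self revised_term_inner_m)
    show "continuous_on (cball x r) ?G"
      using continuous_on_m by (intro continuous_intros continuous_on_cross)
    show "\<exists>y. dist y x < d \<and> hamiltonian y = hamiltonian x \<and> 0 < ?W y" if "0 < d" for d
    proof -
      have "m x \<noteq> 0"
        using assms(1-3) by simp
      then obtain y where "y \<noteq> x" "dist y x < d" "hamiltonian y = hamiltonian x"
        using energy_level_not_isolated \<open>0 < d\<close> by blast
      then show ?thesis
        using energy_casimir_less_of_eigen[OF assms(2-4)] by auto
    qed
  qed (use \<open>0 < r\<close> \<open>0 < eps\<close> has_derivative_hamiltonian G_pos in
    \<open>auto simp: F_eq revised_term_inner_m\<close>)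
qed

end

lemma mvec_e2:
  assumes "lam \<noteq> a1" "lam \<noteq> a2" "lam \<noteq> a3"
  shows "mvec a1 a2 a3 a b c (e2 a1 a2 a3 a b c lam) = lam *\<^sub>R e2 a1 a2 a3 a b c lam"
  using assms by (simp add: mvec_def e2_def vec_eq_iff forall_3 field_simps)

lemma e2_neq_0:
  assumes "(a, b, c) \<noteq> (0, 0, 0)" and "lam \<noteq> a1" "lam \<noteq> a2" "lam \<noteq> a3"
  shows "e2 a1 a2 a3 a b c lam \<noteq> 0"
  using assms by (auto simp: e2_def vec_eq_iff forall_3)

theorem theorem6p4:
  fixes a1 a2 a3 a b c eps lam :: real
  assumes "0 < a1" "a1 < a2" "a2 < a3"
    and "0 < eps"
    and "(a, b, c) \<noteq> (0, 0, 0)"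
    and "0 < lam" "lam < a1"
  shows "\<not> lyapunov_stable (revised_field eps a1 a2 a3 a b c) (e2 a1 a2 a3 a b c lam)"
proof -
  interpret diagonal_affine_field a1 a2 a3 a b c
    using assms(1-3) by unfold_locales auto
  have lam_not_diag: "lam \<noteq> a1" "lam \<noteq> a2" "lam \<noteq> a3"
    using assms(1-3,7) by auto
  show ?thesis
    using not_lyapunov_stable_eigen_equilibrium[OF e2_neq_0[OF assms(5) lam_not_diag]
        mvec_e2[OF lam_not_diag] assms(6,7,4)] .
qed

end
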